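(* Let $W$ be an affine Weyl group, $x\in W$, and let $r_1,\dots,r_n$ be reflections with $H_{r_t}=H_{\alpha,c+t}$ ($1\le t\le n$) for some root $\alpha$ and $c\in\mathbb{Z}$, such that $\ell(r_t\cdots r_1x)>\ell(r_{t-1}\cdots r_1x)$ for all $1\le t\le n$. Then $H^{\mathbf 1}_{r_{t-1}}\subseteq H^{\mathbf 1}_{r_t}$ for all $3\le t\le n$.
   Context: $W$ is the affine Weyl group of a crystallographic root system $\Phi$ in Euclidean space $E$; for $\beta\in\Phi$, $k\in\mathbb{Z}$, $H_{\beta,k}=\{v:\langle v,\beta\rangle=k\}$ and $s_{\beta;k}$ is the orthogonal reflection in it; these are the reflections of $W$, and $H_r$ denotes the hyperplane of the reflection $r$. Elements of $W$ are identified with alcoves ($w\mapsto wA_0$, $A_0$ the fundamental alcove, identified with $1$). $\ell$ is Coxeter length. For a reflection $r$, $H^{\mathbf 1}_r=\{y\in W:\ell(ry)>\ell(y)\}$ is the set of alcoves on the same side of $H_r$ as the identity alcove, and $H^\infty_r=\{y\in W:\ell(ry)<\ell(y)\}$ is the other side. *)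

theory Defs
  imports "HOL-Analysis.Analysis"
begin

definition hyp :: "'a::euclidean_space \<Rightarrow> int \<Rightarrow> 'a set" where
  "hyp \<beta> k = {v. inner v \<beta> = of_int k}"

definition srefl :: "'a::euclidean_space \<Rightarrow> int \<Rightarrow> 'a \<Rightarrow> 'a" where
  "srefl \<beta> k v = v - ((inner v \<beta> - of_int k) * 2 / inner \<beta> \<beta>) *\<^sub>R \<beta>"

definition root_system :: "'a::euclidean_space set \<Rightarrow> bool" where
  "root_system \<Phi> \<longleftrightarrow> finite \<Phi> \<and> 0 \<notin> \<Phi> \<and> span \<Phi> = UNIV
     \<and> (\<forall>\<alpha>\<in>\<Phi>. \<forall>\<beta>\<in>\<Phi>. srefl \<alpha> 0 \<beta> \<in> \<Phi>)
     \<and> (\<forall>\<alpha>\<in>\<Phi>. \<forall>\<beta>\<in>\<Phi>. 2 * inner \<beta> \<alpha> / inner \<alpha> \<alpha> \<in> \<int>)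
     \<and> (\<forall>\<alpha>\<in>\<Phi>. \<forall>c::real. c *\<^sub>R \<alpha> \<in> \<Phi> \<longrightarrow> c = 1 \<or> c = -1)"

definition affine_reflections :: "'a::euclidean_space set \<Rightarrow> ('a \<Rightarrow> 'a) set" where
  "affine_reflections \<Phi> = {srefl \<beta> k | \<beta> k. \<beta> \<in> \<Phi>}"

inductive_set affine_weyl :: "'a::euclidean_space set \<Rightarrow> ('a \<Rightarrow> 'a) set" for \<Phi> where
  id_in: "id \<in> affine_weyl \<Phi>"
| step: "r \<in> affine_reflections \<Phi> \<Longrightarrow> w \<in> affine_weyl \<Phi> \<Longrightarrow> r \<circ> w \<in> affine_weyl \<Phi>"

definition hyperplanes :: "'a::euclidean_space set \<Rightarrow> 'a set set" where
  "hyperplanes \<Phi> = {hyp \<beta> k | \<beta> k. \<beta> \<in> \<Phi>}"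

text \<open>Fundamental alcove w.r.t. the positive system {beta. <beta,xi> > 0} (xi regular).\<close>
definition fund_alcove :: "'a::euclidean_space set \<Rightarrow> 'a \<Rightarrow> 'a set" where
  "fund_alcove \<Phi> \<xi> = {v. \<forall>\<beta>\<in>\<Phi>. inner \<beta> \<xi> > 0 \<longrightarrow> 0 < inner v \<beta> \<and> inner v \<beta> < 1}"

definition is_wall :: "'a::euclidean_space set \<Rightarrow> 'a \<Rightarrow> 'a set \<Rightarrow> bool" where
  "is_wall \<Phi> \<xi> H \<longleftrightarrow> H \<in> hyperplanes \<Phi> \<and>
     (\<exists>p \<in> closure (fund_alcove \<Phi> \<xi>) \<inter> H. \<forall>H' \<in> hyperplanes \<Phi>. p \<in> H' \<longrightarrow> H' = H)"

definition simple_refls :: "'a::euclidean_space set \<Rightarrow> 'a \<Rightarrow> ('a \<Rightarrow> 'a) set" where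
  "simple_refls \<Phi> \<xi> = {srefl \<beta> k | \<beta> k. \<beta> \<in> \<Phi> \<and> is_wall \<Phi> \<xi> (hyp \<beta> k)}"

definition coxeter_length :: "'a::euclidean_space set \<Rightarrow> 'a \<Rightarrow> ('a \<Rightarrow> 'a) \<Rightarrow> nat" where
  "coxeter_length \<Phi> \<xi> w = (LEAST n. \<exists>ws. length ws = n \<and> set ws \<subseteq> simple_refls \<Phi> \<xi>
                                          \<and> foldr (\<circ>) ws id = w)"

definition H1 :: "'a::euclidean_space set \<Rightarrow> 'a \<Rightarrow> ('a \<Rightarrow> 'a) \<Rightarrow> ('a \<Rightarrow> 'a) set" where
  "H1 \<Phi> \<xi> r = {y \<in> affine_weyl \<Phi>. coxeter_length \<Phi> \<xi> (r \<circ> y) > coxeter_length \<Phi> \<xi> y}"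

primrec rprod :: "(nat \<Rightarrow> 'b \<Rightarrow> 'b) \<Rightarrow> nat \<Rightarrow> ('b \<Rightarrow> 'b) \<Rightarrow> 'b \<Rightarrow> 'b" where
  "rprod r 0 x = x"
| "rprod r (Suc t) x = r (Suc t) \<circ> rprod r t x"

end

(* Fix a point p0 of the fundamental alcove A0.  The heart of the argument is the
   criterion l(s w) > l(w) iff w p0 lies on the same side of H_s as p0, for every
   reflection s and every w in W.  If H_s separates p0 from w p0, the alcoves visited along
   a reduced word for w cross H_s at some letter, and deleting that letter gives a shorter
   word for s w; applied to s w this also gives the converse.  Reduced words exist because
   the simple reflections generate W: reflecting a generic point across a wall of A0 that
   separates it from A0 strictly decreases the number of separating hyperplanes, so every
   alcove is reached from A0, and conjugating an alcove with wall H to A0 turns s_H into a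
   conjugate of a simple reflection.

   Suppose the steps across
   H_{alpha,m} and then H_{alpha,m+1} are both ascents.  If A0 were above H_{alpha,m+1}, the
   first ascent would mean the alcove starts above H_{alpha,m}, so the first reflection puts
   it below H_{alpha,m} and hence below H_{alpha,m+1}, and the second step would be a
   descent.  So A0 lies below H_{alpha,m+1}, and then every alcove below H_{alpha,m+1} is
   also below H_{alpha,m+2}. *)
theory Submission
  imports Defs
begin

definition hform :: "'a::euclidean_space \<Rightarrow> int \<Rightarrow> 'a \<Rightarrow> real" where
  "hform \<beta> k v = inner v \<beta> - of_int k"

abbreviation comp_list :: "('b \<Rightarrow> 'b) list \<Rightarrow> 'b \<Rightarrow> 'b" where
  "comp_list ws \<equiv> foldr (\<circ>) ws id"

section \<open>Affine hyperplanes and reflections\<close>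

lemma srefl_hform: "srefl \<beta> k v = v - (hform \<beta> k v * 2 / inner \<beta> \<beta>) *\<^sub>R \<beta>"
  by (simp add: srefl_def hform_def)

lemma mem_hyp_iff: "v \<in> hyp \<beta> k \<longleftrightarrow> hform \<beta> k v = 0"
  by (simp add: hyp_def hform_def)

lemma hform_uminus: "hform (-\<beta>) (-k) v = - hform \<beta> k v"
  by (simp add: hform_def)

lemma hform_eq_iff: "hform \<beta> k = hform \<beta>' k' \<longleftrightarrow> \<beta> = \<beta>' \<and> k = k'"
proof
  assume e: "hform \<beta> k = hform \<beta>' k'"
  have "k = k'" using fun_cong[OF e, of 0] by (simp add: hform_def)
  moreover have "inner (\<beta> - \<beta>') (\<beta> - \<beta>') = 0"
    using fun_cong[OF e, of "\<beta> - \<beta>'"] \<open>k = k'\<close> by (simp add: hform_def inner_diff_right)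
  ultimately show "\<beta> = \<beta>' \<and> k = k'" by simp
qed simp

lemma hform_segment: "hform \<beta> k (p + t *\<^sub>R (c - p)) = hform \<beta> k p + t * (hform \<beta> k c - hform \<beta> k p)"
  by (simp add: hform_def inner_add_left inner_diff_left algebra_simps)

lemma hform_zero_bound: "hform \<beta> k v = 0 \<Longrightarrow> \<bar>real_of_int k\<bar> \<le> norm v * norm \<beta>"
  by (metis Cauchy_Schwarz_ineq2 eq_iff_diff_eq_0 hform_def)

lemma hform_srefl_self: "\<beta> \<noteq> 0 \<Longrightarrow> hform \<beta> k (srefl \<beta> k v) = - hform \<beta> k v"
  by (simp add: srefl_hform hform_def inner_diff_left)

lemma srefl_srefl: "\<beta> \<noteq> 0 \<Longrightarrow> srefl \<beta> k (srefl \<beta> k v) = v"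
  by (simp add: srefl_hform[of \<beta> k "srefl \<beta> k v"] hform_srefl_self) (simp add: srefl_hform)

lemma srefl_fixed_iff: "\<beta> \<noteq> 0 \<Longrightarrow> srefl \<beta> k v = v \<longleftrightarrow> hform \<beta> k v = 0"
  by (simp add: srefl_hform)

lemma srefl_uminus: "srefl (-\<beta>) (-k) = srefl \<beta> k"
  by (rule ext) (simp add: srefl_hform[of "-\<beta>"] srefl_hform[of \<beta>] hform_uminus)

lemma srefl_add: "srefl \<gamma> m (u + v) = srefl \<gamma> m u + srefl \<gamma> 0 v"
  by (simp add: srefl_def inner_add_left add_divide_distrib diff_divide_distrib
      scaleR_add_left algebra_simps)

lemma srefl_zero_scaleR: "srefl \<gamma> 0 (a *\<^sub>R v) = a *\<^sub>R srefl \<gamma> 0 v"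
  by (simp add: srefl_def algebra_simps)

lemma inner_srefl_zero: "inner (srefl \<gamma> 0 u) (srefl \<gamma> 0 v) = inner u v"
proof (cases "\<gamma> = 0")
  case False
  then show ?thesis
    by (simp add: srefl_def inner_diff_left inner_diff_right inner_commute field_simps)
qed (simp add: srefl_def)

lemma dist_srefl: "dist (srefl \<beta> k a) (srefl \<beta> k b) = dist a b"
proof -
  have "srefl \<beta> k a = srefl \<beta> k b + srefl \<beta> 0 (a - b)"
    using srefl_add[of \<beta> k b "a - b"] by simp
  then have "norm (srefl \<beta> k a - srefl \<beta> k b) = norm (srefl \<beta> 0 (a - b))"
    by simp
  also have "\<dots> = norm (a - b)"
    by (simp add: norm_eq_sqrt_inner inner_srefl_zero)
  finally show ?thesis by (simp add: dist_norm)
qed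

text \<open>The linear part of \<open>srefl \<gamma> m\<close> is \<open>srefl \<gamma> 0\<close>, so conjugating the reflection in a
  hyperplane by \<open>srefl \<gamma> m\<close> gives the reflection in the image hyperplane.\<close>
lemma srefl_conj_srefl:
  assumes "\<gamma> \<noteq> 0" and "hform \<beta> k \<circ> srefl \<gamma> m = hform (srefl \<gamma> 0 \<beta>) k'"
  shows "srefl \<gamma> m \<circ> srefl \<beta> k \<circ> srefl \<gamma> m = srefl (srefl \<gamma> 0 \<beta>) k'"
proof
  fix v
  define u where "u = srefl \<gamma> m v"
  define a where "a = hform \<beta> k u * 2 / inner \<beta> \<beta>"
  have hu: "hform \<beta> k u = hform (srefl \<gamma> 0 \<beta>) k' v"
    using fun_cong[OF assms(2), of v] by (simp add: u_def)
  have "srefl \<gamma> m (srefl \<beta> k u) = srefl \<gamma> m (u + (- a) *\<^sub>R \<beta>)"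
    by (simp add: srefl_hform[of \<beta> k u] a_def)
  also have "\<dots> = v - a *\<^sub>R srefl \<gamma> 0 \<beta>"
    using srefl_srefl[OF assms(1)] by (simp only: srefl_add srefl_zero_scaleR u_def) simp
  finally show "(srefl \<gamma> m \<circ> srefl \<beta> k \<circ> srefl \<gamma> m) v = srefl (srefl \<gamma> 0 \<beta>) k' v"
    by (simp add: u_def[symmetric] srefl_hform[of "srefl \<gamma> 0 \<beta>" k' v] a_def hu inner_srefl_zero)
qed

lemma hform_srefl:
  assumes "\<gamma> \<noteq> 0" and "of_int n = 2 * inner \<beta> \<gamma> / inner \<gamma> \<gamma>"
  shows "hform \<beta> k \<circ> srefl \<gamma> m = hform (srefl \<gamma> 0 \<beta>) (k - m * n)"
proof
  fix v
  have "real_of_int (k - m * n) = of_int k - of_int m * (2 * inner \<beta> \<gamma> / inner \<gamma> \<gamma>)"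
    using assms(2) by simp
  moreover have "inner \<gamma> \<gamma> \<noteq> 0" using assms(1) by simp
  ultimately show "(hform \<beta> k \<circ> srefl \<gamma> m) v = hform (srefl \<gamma> 0 \<beta>) (k - m * n) v"
    by (simp add: hform_def srefl_def inner_diff_left inner_diff_right inner_commute[of \<gamma> \<beta>]
        inner_commute[of \<gamma> v] field_simps)
qed

lemma hform_projection:
  assumes "\<beta> \<noteq> 0"
  shows "hform \<beta>' k' (u - (hform \<beta> k u / inner \<beta> \<beta>) *\<^sub>R \<beta>)
    = inner (\<beta>' - (inner \<beta> \<beta>' / inner \<beta> \<beta>) *\<^sub>R \<beta>) u - (of_int k' - of_int k * inner \<beta> \<beta>' / inner \<beta> \<beta>)"
proof -
  have "hform \<beta>' k' (u - (hform \<beta> k u / inner \<beta> \<beta>) *\<^sub>R \<beta>)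
      = inner u \<beta>' - ((inner u \<beta> - of_int k) / inner \<beta> \<beta>) * inner \<beta> \<beta>' - of_int k'"
    by (simp add: hform_def inner_diff_left)
  also have "\<dots> = inner (\<beta>' - (inner \<beta> \<beta>' / inner \<beta> \<beta>) *\<^sub>R \<beta>) u
      - (of_int k' - of_int k * inner \<beta> \<beta>' / inner \<beta> \<beta>)"
    using assms
    by (simp add: inner_diff_left inner_commute[of \<beta>' u] inner_commute[of \<beta> u]) (simp add: field_simps)
  finally show ?thesis .
qed

lemma norm_hyperplane_projection: "norm (u - (inner u \<beta> / inner \<beta> \<beta>) *\<^sub>R \<beta>) \<le> norm u"
proof (cases "\<beta> = 0")
  case False
  define d where "d = u - (inner u \<beta> / inner \<beta> \<beta>) *\<^sub>R \<beta>"
  have "inner d d = inner u u - 2 * (inner u \<beta> / inner \<beta> \<beta>) * inner u \<beta>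
      + (inner u \<beta> / inner \<beta> \<beta>) * (inner u \<beta> / inner \<beta> \<beta>) * inner \<beta> \<beta>"
    by (simp add: d_def inner_diff_left inner_diff_right inner_commute[of \<beta> u] algebra_simps)
  also have "\<dots> = inner u u - (inner u \<beta>) * (inner u \<beta>) / inner \<beta> \<beta>"
    using False by (simp add: field_simps)
  also have "\<dots> \<le> inner u u" by simp
  finally show ?thesis by (simp add: d_def norm_le)
qed simp

lemma open_avoids_finite_hyperplanes:
  fixes U :: "'a::euclidean_space set"
  assumes "finite F" and "open U" and "U \<noteq> {}" and "\<forall>(a, b)\<in>F. a \<noteq> 0"
  shows "\<exists>u\<in>U. \<forall>(a, b)\<in>F. inner a u \<noteq> b"
proof (rule ccontr)
  assume "\<not> ?thesis"
  then have "U \<subseteq> (\<Union>(a, b)\<in>F. {x. inner a x = b})" by auto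
  moreover have "negligible (\<Union>(a, b)\<in>F. {x. inner a x = b})"
    using assms(1,4) by (intro negligible_Union) (auto intro: negligible_hyperplane)
  ultimately show False
    using open_not_negligible[OF assms(2,3)] negligible_subset by blast
qed

lemma mult_pos_of_not_neg: "(x::real) \<noteq> 0 \<Longrightarrow> y \<noteq> 0 \<Longrightarrow> \<not> x * y < 0 \<Longrightarrow> x * y > 0"
  by (metis linorder_neqE_linordered_idom mult_eq_0_iff)

lemma mult_pos_sign_cong: "(x::real) * y > 0 \<Longrightarrow> x * z < 0 \<longleftrightarrow> y * z < 0"
  by (auto simp: zero_less_mult_iff mult_less_0_iff)

lemma linear_sign_change_root:
  fixes a d s :: real
  assumes "a * (a + s * d) < 0" and "0 < s"
  shows "\<exists>t. 0 < t \<and> t < s \<and> a + t * d = 0"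
proof -
  have "a * (a + s * d) = a * a + s * (a * d)" by (simp add: algebra_simps)
  then have "s * (a * d) < 0" using assms(1) zero_le_square[of a] by linarith
  then have "a * d < 0" using assms(2) by (simp add: mult_less_0_iff)
  then consider "a < 0" "d > 0" | "a > 0" "d < 0" by (auto simp: mult_less_0_iff)
  then show ?thesis
  proof cases
    case 1
    then have "a + s * d > 0" using assms(1) by (simp add: mult_less_0_iff)
    then show ?thesis using 1 by (intro exI[of _ "- a / d"]) (simp add: field_simps)
  next
    case 2
    then have "a + s * d < 0" using assms(1) by (simp add: mult_less_0_iff)
    then show ?thesis using 2 by (intro exI[of _ "- a / d"]) (simp add: field_simps)
  qed
qed

lemma linear_root_sign_change:
  fixes a b t :: real
  assumes "a \<noteq> 0" and "a + t * (b - a) = 0" and "0 < t" and "t < 1"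
  shows "a * b < 0"
proof -
  have "b = a * (t - 1) / t" using assms(2,3) by (simp add: field_simps)
  then have "a * b = (a * a) * ((t - 1) / t)" by simp
  moreover have "a * a > 0" using assms(1) not_real_square_gt_zero by blast
  moreover have "(t - 1) / t < 0" using assms(3,4) by (simp add: divide_neg_pos)
  ultimately show ?thesis by (metis mult_pos_neg)
qed

lemma linear_root_between:
  fixes a d :: real
  assumes "a * d < 0"
  shows "0 < a / (a - d) \<and> a / (a - d) < 1 \<and> a + a / (a - d) * (d - a) = 0"
proof -
  consider "a < 0" "d > 0" | "a > 0" "d < 0" using assms by (auto simp: mult_less_0_iff)
  then show ?thesis by cases (simp_all add: field_simps)
qed

lemma linear_root_unique:
  fixes a d t :: real
  assumes "a \<noteq> 0" and "a + t * (d - a) = 0"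
  shows "t = a / (a - d)"
proof -
  have "a - d \<noteq> 0" using assms by auto
  then show ?thesis using assms(2) by (simp add: field_simps)
qed

lemma sign_change_step:
  fixes f :: "nat \<Rightarrow> real"
  assumes "\<forall>i\<le>m. f i \<noteq> 0" and "f 0 * f m < 0"
  shows "\<exists>j<m. f j * f (Suc j) < 0"
  using assms
proof (induction m)
  case (Suc m)
  show ?case
  proof (cases "f 0 * f m < 0")
    case True
    then show ?thesis using Suc by (metis le_SucI less_SucI)
  next
    case False
    then have "f 0 * f m > 0" using Suc.prems(1) by (intro mult_pos_of_not_neg) auto
    then have "f m * f (Suc m) < 0" using Suc.prems(2) mult_pos_sign_cong by (metis mult.commute)
    then show ?thesis by blast
  qed
qed simp

lemma foldr_comp_eq: "foldr (\<circ>) xs g = comp_list xs \<circ> g"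
  by (induction xs) auto

lemma comp_list_append: "comp_list (xs @ ys) = comp_list xs \<circ> comp_list ys"
  by (simp add: foldr_comp_eq[of xs "comp_list ys"])

lemma comp_list_rev_inverse:
  "\<forall>r\<in>set ws. r \<circ> r = id \<Longrightarrow> comp_list (rev ws) \<circ> comp_list ws = id"
proof (induction ws)
  case (Cons r ws)
  have rr: "r \<circ> r = id" using Cons.prems by (meson list.set_intros(1))
  have IH: "comp_list (rev ws) \<circ> comp_list ws = id"
    using Cons.IH Cons.prems by (meson list.set_intros(2))
  have "comp_list (rev (r # ws)) \<circ> comp_list (r # ws)
      = comp_list (rev ws) \<circ> (r \<circ> r) \<circ> comp_list ws"
    by (simp add: comp_list_append comp_assoc del: foldr_append)
  also have "\<dots> = id"
    by (simp only: rr comp_id IH)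
  finally show ?case .
qed simp

lemma comp_list_delete:
  assumes "j < length ws" and "s \<circ> comp_list (take j ws) = comp_list (take j ws) \<circ> ws ! j"
    and "ws ! j \<circ> ws ! j = id"
  shows "s \<circ> comp_list ws = comp_list (take j ws @ drop (Suc j) ws)"
proof -
  define T where "T = comp_list (take j ws)"
  define D where "D = comp_list (drop (Suc j) ws)"
  have "comp_list ws = comp_list (take j ws @ ws ! j # drop (Suc j) ws)"
    using id_take_nth_drop[OF assms(1)] by simp
  then have "s \<circ> comp_list ws = (s \<circ> T) \<circ> ws ! j \<circ> D"
    by (simp add: comp_list_append T_def D_def comp_assoc del: foldr_append)
  also have "\<dots> = T \<circ> (ws ! j \<circ> ws ! j) \<circ> D"
    using assms(2) by (simp add: T_def comp_assoc)
  finally show ?thesis using assms(3) by (simp add: comp_list_append T_def D_def del: foldr_append)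
qed

section \<open>The affine Weyl group of a root system\<close>

locale affine_weyl_setting =
  fixes \<Phi> :: "'a::euclidean_space set" and \<xi> :: 'a
  assumes root_system: "root_system \<Phi>" and regular: "\<forall>\<beta>\<in>\<Phi>. inner \<beta> \<xi> \<noteq> 0"
begin

abbreviation "W \<equiv> affine_weyl \<Phi>"
abbreviation "A0 \<equiv> fund_alcove \<Phi> \<xi>"
abbreviation "S \<equiv> simple_refls \<Phi> \<xi>"
abbreviation "len \<equiv> coxeter_length \<Phi> \<xi>"

lemma finite_roots: "finite \<Phi>"
  using root_system by (simp add: root_system_def)

lemma root_nonzero: "\<beta> \<in> \<Phi> \<Longrightarrow> \<beta> \<noteq> 0"
  using root_system unfolding root_system_def by metis

lemma srefl_root: "\<alpha> \<in> \<Phi> \<Longrightarrow> \<beta> \<in> \<Phi> \<Longrightarrow> srefl \<alpha> 0 \<beta> \<in> \<Phi>"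
  using root_system by (simp add: root_system_def)

lemma uminus_root: "\<beta> \<in> \<Phi> \<Longrightarrow> -\<beta> \<in> \<Phi>"
  using srefl_root[of \<beta> \<beta>] root_nonzero[of \<beta>] by (simp add: srefl_def scaleR_2)

lemma cartan_integer: "\<alpha> \<in> \<Phi> \<Longrightarrow> \<beta> \<in> \<Phi> \<Longrightarrow> \<exists>n::int. 2 * inner \<beta> \<alpha> / inner \<alpha> \<alpha> = of_int n"
  using root_system unfolding root_system_def by (metis Ints_cases)

lemma root_multiple: "\<beta> \<in> \<Phi> \<Longrightarrow> a *\<^sub>R \<beta> \<in> \<Phi> \<Longrightarrow> a = 1 \<or> a = -1"
  using root_system by (simp add: root_system_def)

lemma root_not_multiple:
  assumes "\<beta> \<in> \<Phi>" "\<beta>' \<in> \<Phi>" "\<beta>' \<noteq> \<beta>" "\<beta>' \<noteq> -\<beta>"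
  shows "\<beta>' \<noteq> a *\<^sub>R \<beta>"
  using root_multiple[OF assms(1), of a] assms(2-4) by auto

lemma non_parallel_roots_independent:
  assumes "\<beta> \<in> \<Phi>" "\<beta>' \<in> \<Phi>" "\<beta>' \<noteq> \<beta>" "\<beta>' \<noteq> -\<beta>" "a \<noteq> 0"
  shows "b *\<^sub>R \<beta> - a *\<^sub>R \<beta>' \<noteq> 0"
proof
  assume "b *\<^sub>R \<beta> - a *\<^sub>R \<beta>' = 0"
  then have "\<beta>' = (1 / a) *\<^sub>R (b *\<^sub>R \<beta>)" using assms(5) by (simp add: algebra_simps)
  then show False using root_not_multiple[OF assms(1-4), of "b / a"] by simp
qed

lemma hyp_eq_iff:
  assumes \<beta>: "\<beta> \<in> \<Phi>" and \<beta>': "\<beta>' \<in> \<Phi>"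
  shows "hyp \<beta> k = hyp \<beta>' k' \<longleftrightarrow> (\<beta>' = \<beta> \<and> k' = k) \<or> (\<beta>' = -\<beta> \<and> k' = -k)"
proof
  assume "hyp \<beta> k = hyp \<beta>' k'"
  then have same_zeros: "hform \<beta> k v = 0 \<longleftrightarrow> hform \<beta>' k' v = 0" for v
    by (metis mem_hyp_iff)
  define B where "B = inner \<beta> \<beta>"
  have "B \<noteq> 0" using root_nonzero[OF \<beta>] by (simp add: B_def)
  define v0 where "v0 = (of_int k / B) *\<^sub>R \<beta>"
  have "hform \<beta> k v0 = 0" using \<open>B \<noteq> 0\<close> by (simp add: hform_def v0_def B_def)
  then have v0: "inner v0 \<beta>' = of_int k'" using same_zeros by (simp add: hform_def)
  define l where "l = inner \<beta>' \<beta> / B"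
  define u where "u = \<beta>' - l *\<^sub>R \<beta>"
  have u\<beta>: "inner u \<beta> = 0" using \<open>B \<noteq> 0\<close> by (simp add: u_def l_def B_def inner_diff_left)
  then have "hform \<beta> k (v0 + u) = 0" using \<open>hform \<beta> k v0 = 0\<close> by (simp add: hform_def inner_add_left)
  then have "inner (v0 + u) \<beta>' = of_int k'" using same_zeros by (simp add: hform_def)
  then have "inner u \<beta>' = 0" using v0 by (simp add: inner_add_left)
  then have "inner u u = 0" using u\<beta> by (simp add: u_def inner_diff_right)
  then have \<beta>'_eq: "\<beta>' = l *\<^sub>R \<beta>" by (simp add: u_def)
  then have "l = 1 \<or> l = -1" using root_multiple[OF \<beta>] \<beta>' by simp
  moreover have "of_int k' = l * of_int k" using v0 \<beta>'_eq \<open>B \<noteq> 0\<close> by (simp add: v0_def B_def)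
  ultimately show "(\<beta>' = \<beta> \<and> k' = k) \<or> (\<beta>' = -\<beta> \<and> k' = -k)" using \<beta>'_eq by auto
next
  assume "(\<beta>' = \<beta> \<and> k' = k) \<or> (\<beta>' = -\<beta> \<and> k' = -k)"
  then show "hyp \<beta> k = hyp \<beta>' k'" by (auto simp: mem_hyp_iff hform_uminus)
qed

lemma srefl_eq_if_hyp_eq:
  "\<beta> \<in> \<Phi> \<Longrightarrow> \<beta>' \<in> \<Phi> \<Longrightarrow> hyp \<beta> k = hyp \<beta>' k' \<Longrightarrow> srefl \<beta> k = srefl \<beta>' k'"
  using hyp_eq_iff srefl_uminus by metis

lemma srefl_reflection: "\<beta> \<in> \<Phi> \<Longrightarrow> srefl \<beta> k \<in> affine_reflections \<Phi>"
  by (auto simp: affine_reflections_def)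

lemma reflection_involutive: "r \<in> affine_reflections \<Phi> \<Longrightarrow> r \<circ> r = id"
  by (auto simp: affine_reflections_def fun_eq_iff srefl_srefl root_nonzero)

lemma reflection_in_W: "r \<in> affine_reflections \<Phi> \<Longrightarrow> r \<in> W"
  using affine_weyl.step[OF _ affine_weyl.id_in] by simp

lemma comp_list_in_W: "set ws \<subseteq> affine_reflections \<Phi> \<Longrightarrow> comp_list ws \<in> W"
  by (induction ws) (auto intro: affine_weyl.intros)

lemma simple_refls_subset: "S \<subseteq> affine_reflections \<Phi>"
  by (auto simp: simple_refls_def affine_reflections_def)

lemma simple_word_in_W: "set ws \<subseteq> S \<Longrightarrow> comp_list ws \<in> W"
  using comp_list_in_W simple_refls_subset by blast

lemma simple_word_inverse:
  assumes "set ws \<subseteq> S"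
  shows "comp_list (rev ws) (comp_list ws v) = v" and "comp_list ws (comp_list (rev ws) v) = v"
proof -
  have "\<forall>r\<in>set ws. r \<circ> r = id" "\<forall>r\<in>set (rev ws). r \<circ> r = id"
    using assms simple_refls_subset reflection_involutive by auto
  from comp_list_rev_inverse[OF this(1)] comp_list_rev_inverse[OF this(2)]
  show "comp_list (rev ws) (comp_list ws v) = v" "comp_list ws (comp_list (rev ws) v) = v"
    by (simp_all add: pointfree_idE)
qed

lemma srefl_pullback:
  assumes "\<gamma> \<in> \<Phi>" and "\<beta> \<in> \<Phi>"
  shows "\<exists>\<beta>'\<in>\<Phi>. \<exists>k'. hform \<beta> k \<circ> srefl \<gamma> m = hform \<beta>' k'
           \<and> srefl \<beta> k \<circ> srefl \<gamma> m = srefl \<gamma> m \<circ> srefl \<beta>' k'"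
proof -
  obtain n where n: "2 * inner \<beta> \<gamma> / inner \<gamma> \<gamma> = of_int n" using cartan_integer assms by blast
  define \<beta>' where "\<beta>' = srefl \<gamma> 0 \<beta>"
  have \<gamma>: "\<gamma> \<noteq> 0" using root_nonzero assms(1) .
  have pull: "hform \<beta> k \<circ> srefl \<gamma> m = hform \<beta>' (k - m * n)"
    using hform_srefl[OF \<gamma>] n by (simp add: \<beta>'_def)
  have "srefl \<gamma> m \<circ> srefl \<beta> k \<circ> srefl \<gamma> m = srefl \<beta>' (k - m * n)"
    using srefl_conj_srefl[OF \<gamma>] pull by (simp add: \<beta>'_def)
  then have "srefl \<gamma> m \<circ> (srefl \<gamma> m \<circ> srefl \<beta> k \<circ> srefl \<gamma> m) = srefl \<gamma> m \<circ> srefl \<beta>' (k - m * n)"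
    by simp
  then have "srefl \<beta> k \<circ> srefl \<gamma> m = srefl \<gamma> m \<circ> srefl \<beta>' (k - m * n)"
    using srefl_srefl[OF \<gamma>] by (simp add: comp_def)
  with pull show ?thesis using srefl_root[OF assms] \<beta>'_def by blast
qed

lemma weyl_pullback:
  assumes "w \<in> W" and "\<beta> \<in> \<Phi>"
  shows "\<exists>\<beta>'\<in>\<Phi>. \<exists>k'. hform \<beta> k \<circ> w = hform \<beta>' k' \<and> srefl \<beta> k \<circ> w = w \<circ> srefl \<beta>' k'"
  using assms
proof (induction arbitrary: \<beta> k rule: affine_weyl.induct)
  case (step r w)
  obtain \<gamma> m where r: "r = srefl \<gamma> m" "\<gamma> \<in> \<Phi>" using step.hyps(1) by (auto simp: affine_reflections_def)
  obtain \<beta>1 k1 where 1: "\<beta>1 \<in> \<Phi>" "hform \<beta> k \<circ> r = hform \<beta>1 k1"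
    "srefl \<beta> k \<circ> r = r \<circ> srefl \<beta>1 k1"
    using srefl_pullback[OF r(2) step.prems] r(1) by blast
  obtain \<beta>2 k2 where 2: "\<beta>2 \<in> \<Phi>" "hform \<beta>1 k1 \<circ> w = hform \<beta>2 k2"
    "srefl \<beta>1 k1 \<circ> w = w \<circ> srefl \<beta>2 k2"
    using step.IH[OF 1(1)] by blast
  have "hform \<beta> k \<circ> (r \<circ> w) = hform \<beta>2 k2" using 1(2) 2(2) by (simp add: comp_assoc[symmetric])
  moreover have "srefl \<beta> k \<circ> (r \<circ> w) = (r \<circ> w) \<circ> srefl \<beta>2 k2"
    using 1(3) 2(3) by (metis comp_assoc)
  ultimately show ?case using 2(1) by blast
qed auto

lemma weyl_continuous: "w \<in> W \<Longrightarrow> continuous_on UNIV w"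
proof (induction rule: affine_weyl.induct)
  case (step r w)
  obtain \<gamma> m where r: "r = srefl \<gamma> m" "\<gamma> \<in> \<Phi>"
    using step.hyps(1) by (auto simp: affine_reflections_def)
  have "continuous_on UNIV (srefl \<gamma> m)"
    unfolding srefl_def[abs_def] using root_nonzero[OF r(2)] by (intro continuous_intros) auto
  then show ?case using step.IH r(1) by (auto intro: continuous_on_compose2)
qed (simp add: continuous_on_id)

section \<open>The fundamental alcove and separating hyperplanes\<close>

definition generic :: "'a \<Rightarrow> bool" where
  "generic c \<longleftrightarrow> (\<forall>\<beta>\<in>\<Phi>. \<forall>k. hform \<beta> k c \<noteq> 0)"

lemma alcove_same_side:
  assumes p: "p \<in> A0" and q: "q \<in> A0" and \<beta>: "\<beta> \<in> \<Phi>"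
  shows "hform \<beta> k p * hform \<beta> k q > 0"
proof -
  have "\<exists>j::int. \<forall>v\<in>A0. of_int j < inner v \<beta> \<and> inner v \<beta> < of_int j + 1"
  proof (cases "inner \<beta> \<xi> > 0")
    case True
    then show ?thesis using \<beta> by (intro exI[of _ 0]) (auto simp: fund_alcove_def)
  next
    case False
    then have "inner (-\<beta>) \<xi> > 0" using regular \<beta> by (simp add: order_less_le)
    then show ?thesis using uminus_root[OF \<beta>]
      by (intro exI[of _ "-1"]) (fastforce simp: fund_alcove_def)
  qed
  then obtain j :: int where "\<forall>v\<in>A0. of_int j < inner v \<beta> \<and> inner v \<beta> < of_int j + 1" ..
  then have "of_int j < inner p \<beta>" "inner p \<beta> < of_int j + 1"
    "of_int j < inner q \<beta>" "inner q \<beta> < of_int j + 1" using p q by auto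
  moreover have "of_int k \<le> (of_int j :: real) \<or> of_int j + 1 \<le> (of_int k :: real)"
    by (metis int_le_real_less not_less of_int_add of_int_less_iff of_int_1)
  ultimately show ?thesis
    unfolding hform_def by (elim disjE) (auto intro!: mult_pos_pos mult_neg_neg)
qed

lemma alcove_generic: "p \<in> A0 \<Longrightarrow> generic p"
  unfolding generic_def by (metis alcove_same_side less_irrefl mult_zero_left)

lemma in_alcoveI:
  assumes p: "p \<in> A0" and same: "\<forall>\<beta>\<in>\<Phi>. \<forall>k. hform \<beta> k p * hform \<beta> k q > 0"
  shows "q \<in> A0"
  unfolding fund_alcove_def
proof (intro CollectI ballI impI)
  fix \<beta> assume \<beta>: "\<beta> \<in> \<Phi>" "0 < inner \<beta> \<xi>"
  have "0 < inner p \<beta>" "inner p \<beta> < 1" using p \<beta> by (auto simp: fund_alcove_def)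
  moreover have "hform \<beta> 0 p * hform \<beta> 0 q > 0" "hform \<beta> 1 p * hform \<beta> 1 q > 0"
    using same \<beta> by auto
  ultimately show "0 < inner q \<beta> \<and> inner q \<beta> < 1"
    unfolding hform_def by (auto simp: zero_less_mult_iff)
qed

lemma open_alcove: "open A0"
proof -
  have "A0 = (\<Inter>\<beta>\<in>{\<beta>\<in>\<Phi>. 0 < inner \<beta> \<xi>}. {v. inner \<beta> v > 0} \<inter> {v. inner \<beta> v < 1})"
    by (auto simp: fund_alcove_def inner_commute)
  then show ?thesis
    using finite_roots by (auto intro!: open_INT open_Int open_halfspace_lt open_halfspace_gt)
qed

lemma alcove_nonempty: "A0 \<noteq> {}"
proof -
  define T where "T = (\<Sum>\<beta>\<in>\<Phi>. \<bar>inner \<beta> \<xi>\<bar>)"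
  have "T \<ge> 0" by (simp add: T_def sum_nonneg)
  have "(1 / (1 + T)) *\<^sub>R \<xi> \<in> A0" unfolding fund_alcove_def
  proof (intro CollectI ballI impI)
    fix \<beta> assume \<beta>: "\<beta> \<in> \<Phi>" "0 < inner \<beta> \<xi>"
    have "inner \<beta> \<xi> \<le> T"
      unfolding T_def using member_le_sum[of \<beta> \<Phi> "\<lambda>\<beta>. \<bar>inner \<beta> \<xi>\<bar>"] finite_roots \<beta> by simp
    then show "0 < inner ((1 / (1 + T)) *\<^sub>R \<xi>) \<beta> \<and> inner ((1 / (1 + T)) *\<^sub>R \<xi>) \<beta> < 1"
      using \<beta>(2) \<open>T \<ge> 0\<close> by (simp add: inner_commute field_simps)
  qed
  then show ?thesis by blast
qed

lemma weyl_generic: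
  assumes "w \<in> W" and "generic c"
  shows "generic (w c)"
  unfolding generic_def
proof (intro ballI allI)
  fix \<beta> k assume "\<beta> \<in> \<Phi>"
  then obtain \<beta>' k' where "\<beta>' \<in> \<Phi>" "hform \<beta> k \<circ> w = hform \<beta>' k'"
    using weyl_pullback[OF assms(1)] by blast
  then show "hform \<beta> k (w c) \<noteq> 0" using assms(2) by (metis comp_apply generic_def)
qed

lemma finite_hyperplanes_bounded:
  "finite {(\<beta>, k::int). \<beta> \<in> \<Phi> \<and> \<bar>real_of_int k\<bar> \<le> R * norm \<beta>}"
proof (rule finite_subset)
  show "{(\<beta>, k::int). \<beta> \<in> \<Phi> \<and> \<bar>real_of_int k\<bar> \<le> R * norm \<beta>}
      \<subseteq> Sigma \<Phi> (\<lambda>\<beta>. {-\<lceil>R * norm \<beta>\<rceil>..\<lceil>R * norm \<beta>\<rceil>})"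
    by (auto simp: le_ceiling_iff abs_le_iff minus_le_iff)
  show "finite (Sigma \<Phi> (\<lambda>\<beta>. {-\<lceil>R * norm \<beta>\<rceil>..\<lceil>R * norm \<beta>\<rceil>}))"
    using finite_roots by auto
qed

lemma hyperplanes_bounded_away:
  "\<exists>e>0. \<forall>\<beta>\<in>\<Phi>. \<forall>k. hform \<beta> k z \<noteq> 0 \<longrightarrow> e * norm \<beta> \<le> \<bar>hform \<beta> k z\<bar>"
proof -
  define K where "K = {(\<beta>, k::int). \<beta> \<in> \<Phi> \<and> \<bar>real_of_int k\<bar> \<le> (norm z + 1) * norm \<beta>}"
  define E where "E = insert 1 ((\<lambda>(\<beta>, k). \<bar>hform \<beta> k z\<bar> / norm \<beta>) ` {(\<beta>, k)\<in>K. hform \<beta> k z \<noteq> 0})"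
  have "finite {(\<beta>, k)\<in>K. hform \<beta> k z \<noteq> 0}"
    unfolding K_def by (rule finite_subset[OF _ finite_hyperplanes_bounded[of "norm z + 1"]]) auto
  then have "finite E" by (simp add: E_def)
  have "\<forall>x\<in>E. x > 0" using root_nonzero by (auto simp: E_def K_def)
  define e where "e = Min E"
  have "e > 0" "e \<le> 1" using \<open>finite E\<close> \<open>\<forall>x\<in>E. x > 0\<close> by (simp_all add: e_def E_def)
  have "e * norm \<beta> \<le> \<bar>hform \<beta> k z\<bar>" if \<beta>: "\<beta> \<in> \<Phi>" and h: "hform \<beta> k z \<noteq> 0" for \<beta> k
  proof (cases "(\<beta>, k) \<in> K")
    case True
    then have "e \<le> \<bar>hform \<beta> k z\<bar> / norm \<beta>"
      unfolding e_def using \<open>finite E\<close> h by (intro Min_le) (auto simp: E_def)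
    then show ?thesis using root_nonzero[OF \<beta>] by (simp add: field_simps)
  next
    case False
    then have "(norm z + 1) * norm \<beta> < \<bar>real_of_int k\<bar>" using \<beta> by (auto simp: K_def)
    moreover have "\<bar>inner z \<beta>\<bar> \<le> norm z * norm \<beta>" by (rule Cauchy_Schwarz_ineq2)
    moreover have "e * norm \<beta> \<le> norm \<beta>"
      using \<open>e \<le> 1\<close> \<open>e > 0\<close> by (intro mult_left_le_one_le) auto
    ultimately show ?thesis by (simp add: hform_def distrib_right)
  qed
  then show ?thesis using \<open>e > 0\<close> by blast
qed

lemma locally_same_side:
  "\<exists>e>0. \<forall>\<beta>\<in>\<Phi>. \<forall>k v. hform \<beta> k z \<noteq> 0 \<longrightarrow> dist v z < e \<longrightarrow> hform \<beta> k v * hform \<beta> k z > 0"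
proof -
  obtain e where e: "e > 0" "\<forall>\<beta>\<in>\<Phi>. \<forall>k. hform \<beta> k z \<noteq> 0 \<longrightarrow> e * norm \<beta> \<le> \<bar>hform \<beta> k z\<bar>"
    using hyperplanes_bounded_away by blast
  have "hform \<beta> k v * hform \<beta> k z > 0"
    if \<beta>: "\<beta> \<in> \<Phi>" and h: "hform \<beta> k z \<noteq> 0" and d: "dist v z < e" for \<beta> k v
  proof -
    have "\<bar>hform \<beta> k v - hform \<beta> k z\<bar> \<le> dist v z * norm \<beta>"
      using Cauchy_Schwarz_ineq2[of "v - z" \<beta>] by (simp add: hform_def inner_diff_left dist_norm)
    also have "\<dots> < e * norm \<beta>" using d root_nonzero[OF \<beta>] by simp
    also have "\<dots> \<le> \<bar>hform \<beta> k z\<bar>" using e(2) \<beta> h by blast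
    finally show ?thesis by (auto simp: zero_less_mult_iff abs_if split: if_splits)
  qed
  then show ?thesis using e(1) by blast
qed

definition separating :: "'a \<Rightarrow> 'a \<Rightarrow> ('a \<times> int) set" where
  "separating p q = {(\<beta>, k). \<beta> \<in> \<Phi> \<and> hform \<beta> k p * hform \<beta> k q < 0}"

lemma finite_separating: "finite (separating p q)"
proof (rule finite_subset)
  show "separating p q \<subseteq> {(\<beta>, k). \<beta> \<in> \<Phi> \<and> \<bar>real_of_int k\<bar> \<le> (norm p + norm q) * norm \<beta>}"
  proof clarify
    fix \<beta> k assume "(\<beta>, k) \<in> separating p q"
    then have \<beta>: "\<beta> \<in> \<Phi>" and s: "hform \<beta> k p * hform \<beta> k q < 0" by (auto simp: separating_def)
    have "\<bar>inner p \<beta>\<bar> \<le> norm p * norm \<beta>" "\<bar>inner q \<beta>\<bar> \<le> norm q * norm \<beta>"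
      by (rule Cauchy_Schwarz_ineq2)+
    moreover have "min (inner p \<beta>) (inner q \<beta>) \<le> of_int k \<and> of_int k \<le> max (inner p \<beta>) (inner q \<beta>)"
      using s by (auto simp: hform_def mult_less_0_iff)
    ultimately show "\<beta> \<in> \<Phi> \<and> \<bar>real_of_int k\<bar> \<le> (norm p + norm q) * norm \<beta>"
      using \<beta> by (auto simp: distrib_right)
  qed
qed (rule finite_hyperplanes_bounded)

lemma separating_uminus: "(-\<beta>, -k) \<in> separating p q \<longleftrightarrow> (\<beta>, k) \<in> separating p q"
  using uminus_root[of \<beta>] uminus_root[of "-\<beta>"] by (auto simp: separating_def hform_uminus)

lemma separating_alcove_eq: "p \<in> A0 \<Longrightarrow> p' \<in> A0 \<Longrightarrow> separating p c = separating p' c"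
  using alcove_same_side mult_pos_sign_cong by (fastforce simp: separating_def)

lemma segment_zero_separating:
  assumes "p \<in> A0" "\<beta> \<in> \<Phi>" "0 < t" "t < 1" "hform \<beta> k (p + t *\<^sub>R (c - p)) = 0"
  shows "(\<beta>, k) \<in> separating p c"
  using linear_root_sign_change[of "hform \<beta> k p" t "hform \<beta> k c"] alcove_generic assms
  by (auto simp: separating_def generic_def hform_segment)

lemma segment_in_alcove:
  assumes p: "p \<in> A0" and "0 \<le> s"
    and no_zero: "\<And>\<beta> k t. \<beta> \<in> \<Phi> \<Longrightarrow> 0 < t \<Longrightarrow> t \<le> s \<Longrightarrow> hform \<beta> k (p + t *\<^sub>R (c - p)) \<noteq> 0"
  shows "p + s *\<^sub>R (c - p) \<in> A0"
proof (rule in_alcoveI[OF p], intro ballI allI)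
  fix \<beta> k assume \<beta>: "\<beta> \<in> \<Phi>"
  have hp: "hform \<beta> k p \<noteq> 0" using alcove_generic[OF p] \<beta> by (simp add: generic_def)
  show "hform \<beta> k p * hform \<beta> k (p + s *\<^sub>R (c - p)) > 0"
  proof (cases "s = 0")
    case True
    then show ?thesis using hp by (auto simp: zero_less_mult_iff linorder_neq_iff)
  next
    case False
    then have "0 < s" using assms(2) by simp
    have "\<not> hform \<beta> k p * hform \<beta> k (p + s *\<^sub>R (c - p)) < 0"
    proof
      assume "hform \<beta> k p * hform \<beta> k (p + s *\<^sub>R (c - p)) < 0"
      then have "hform \<beta> k p * (hform \<beta> k p + s * (hform \<beta> k c - hform \<beta> k p)) < 0"
        by (simp add: hform_segment)
      then obtain t where "0 < t" "t < s" "hform \<beta> k p + t * (hform \<beta> k c - hform \<beta> k p) = 0"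
        using linear_sign_change_root[OF _ \<open>0 < s\<close>] by blast
      then show False using no_zero[OF \<beta>, of t k] by (simp add: hform_segment)
    qed
    then show ?thesis by (rule mult_pos_of_not_neg[OF hp no_zero[OF \<beta> \<open>0 < s\<close> order_refl]])
  qed
qed

lemma first_crossing:
  assumes p: "p \<in> A0" and sep: "(\<beta>1, k1) \<in> separating p c"
  obtains t \<beta> k where "0 < t" "t < 1" "(\<beta>, k) \<in> separating p c"
    "hform \<beta> k (p + t *\<^sub>R (c - p)) = 0" "p + t *\<^sub>R (c - p) \<in> closure A0"
proof -
  define seg where "seg t = p + t *\<^sub>R (c - p)" for t
  define time where "time \<beta> k = hform \<beta> k p / (hform \<beta> k p - hform \<beta> k c)" for \<beta> k
  define T where "T = (\<lambda>(\<beta>, k). time \<beta> k) ` separating p c"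
  have "finite T" using finite_separating by (simp add: T_def)
  have time: "0 < time \<beta> k \<and> time \<beta> k < 1 \<and> hform \<beta> k (seg (time \<beta> k)) = 0"
    if "(\<beta>, k) \<in> separating p c" for \<beta> k
    using linear_root_between[of "hform \<beta> k p" "hform \<beta> k c"] that
    by (simp add: separating_def time_def seg_def hform_segment)
  have T_le: "Min T \<le> t" if "\<beta> \<in> \<Phi>" "0 < t" "t < 1" "hform \<beta> k (seg t) = 0" for \<beta> k t
  proof -
    have "(\<beta>, k) \<in> separating p c"
      using segment_zero_separating[OF p that(1-3)] that(4) by (simp add: seg_def)
    moreover have "t = time \<beta> k"
      using linear_root_unique[of "hform \<beta> k p" t "hform \<beta> k c"] alcove_generic[OF p] that
      by (simp add: generic_def time_def seg_def hform_segment)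
    ultimately have "t \<in> T" unfolding T_def by (auto intro: rev_image_eqI)
    then show ?thesis using \<open>finite T\<close> by (rule Min_le[rotated])
  qed
  define ts where "ts = Min T"
  have "ts \<in> T" using sep \<open>finite T\<close> by (auto simp: ts_def T_def intro!: Min_in)
  then obtain \<beta>s ks where s: "(\<beta>s, ks) \<in> separating p c" "ts = time \<beta>s ks"
    by (auto simp: T_def)
  then have ts: "0 < ts" "ts < 1" "hform \<beta>s ks (seg ts) = 0" using time by auto
  have "seg s \<in> A0" if "0 \<le> s" "s < ts" for s
    unfolding seg_def
  proof (rule segment_in_alcove[OF p that(1)])
    fix \<beta> k t assume "\<beta> \<in> \<Phi>" "0 < t" "t \<le> s"
    then show "hform \<beta> k (p + t *\<^sub>R (c - p)) \<noteq> 0"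
      using T_le[of \<beta> t k] that ts(2) by (auto simp: seg_def ts_def)
  qed
  then have "seg ` {0..<ts} \<subseteq> closure A0" using closure_subset by fastforce
  then have "seg ` closure {0..<ts} \<subseteq> closure A0"
    by (intro image_closure_subset) (auto simp: seg_def[abs_def] intro!: continuous_intros)
  then have "seg ts \<in> closure A0" using ts(1) by auto
  then show thesis using that ts s(1) by (simp add: seg_def)
qed

text \<open>The condition says that \<open>p\<close> avoids the hyperplane spanned by \<open>c\<close> and
  \<open>H\<^sub>\<beta>\<^sub>,\<^sub>k \<inter> H\<^sub>\<beta>\<^sub>'\<^sub>,\<^sub>k\<^sub>'\<close>, so the segment from \<open>p\<close> to \<open>c\<close> meets two non-parallel
  hyperplanes separating \<open>p\<close> from \<open>c\<close> at different points.\<close>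
lemma alcove_point_off_pair_hyperplanes:
  assumes c: "generic c" and p0: "p0 \<in> A0"
  obtains p where "p \<in> A0"
    "\<And>\<beta> k \<beta>' k'. (\<beta>, k) \<in> separating p0 c \<Longrightarrow> (\<beta>', k') \<in> separating p0 c \<Longrightarrow> \<beta>' \<noteq> \<beta> \<Longrightarrow>
       \<beta>' \<noteq> -\<beta> \<Longrightarrow> hform \<beta>' k' c * hform \<beta> k p \<noteq> hform \<beta> k c * hform \<beta>' k' p"
proof -
  define P where "P = {(x, y) \<in> separating p0 c \<times> separating p0 c. fst y \<noteq> fst x \<and> fst y \<noteq> - fst x}"
  define F where "F = (\<lambda>((\<beta>, k), (\<beta>', k')). (hform \<beta>' k' c *\<^sub>R \<beta> - hform \<beta> k c *\<^sub>R \<beta>',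
    hform \<beta>' k' c * of_int k - hform \<beta> k c * of_int k')) ` P"
  have "finite P"
    unfolding P_def by (rule finite_subset[of _ "separating p0 c \<times> separating p0 c"])
      (auto simp: finite_separating)
  then have "finite F" by (simp add: F_def)
  moreover have "\<forall>(a, b)\<in>F. a \<noteq> 0"
    using c non_parallel_roots_independent by (auto simp: F_def P_def separating_def generic_def)
  ultimately obtain p where p: "p \<in> A0" and avoid: "\<forall>(a, b)\<in>F. inner a p \<noteq> b"
    using open_avoids_finite_hyperplanes[OF _ open_alcove alcove_nonempty] by blast
  have "hform \<beta>' k' c * hform \<beta> k p \<noteq> hform \<beta> k c * hform \<beta>' k' p"
    if "(\<beta>, k) \<in> separating p0 c" "(\<beta>', k') \<in> separating p0 c" "\<beta>' \<noteq> \<beta>" "\<beta>' \<noteq> -\<beta>" for \<beta> k \<beta>' k'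
  proof -
    have "((\<beta>, k), (\<beta>', k')) \<in> P" using that by (simp add: P_def)
    then have "inner (hform \<beta>' k' c *\<^sub>R \<beta> - hform \<beta> k c *\<^sub>R \<beta>') p
        \<noteq> hform \<beta>' k' c * of_int k - hform \<beta> k c * of_int k'"
      using avoid unfolding F_def by fastforce
    then show ?thesis by (simp add: hform_def inner_diff_left inner_commute algebra_simps)
  qed
  then show thesis using that p by blast
qed

lemma exists_separating_wall:
  assumes c: "generic c" and p0: "p0 \<in> A0" and sep: "separating p0 c \<noteq> {}"
  shows "\<exists>\<beta>0 k0. (\<beta>0, k0) \<in> separating p0 c \<and> is_wall \<Phi> \<xi> (hyp \<beta>0 k0)"
proof -
  obtain p where p: "p \<in> A0" and off: "\<And>\<beta> k \<beta>' k'. (\<beta>, k) \<in> separating p0 c \<Longrightarrow>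
      (\<beta>', k') \<in> separating p0 c \<Longrightarrow> \<beta>' \<noteq> \<beta> \<Longrightarrow> \<beta>' \<noteq> -\<beta> \<Longrightarrow>
      hform \<beta>' k' c * hform \<beta> k p \<noteq> hform \<beta> k c * hform \<beta>' k' p"
    using alcove_point_off_pair_hyperplanes[OF c p0] by blast
  have sep_eq: "separating p c = separating p0 c" using separating_alcove_eq[OF p p0] .
  obtain \<beta>1 k1 where "(\<beta>1, k1) \<in> separating p c" using sep sep_eq by auto
  then obtain t \<beta>s ks where t: "0 < t" "t < 1" and s: "(\<beta>s, ks) \<in> separating p c"
    and z: "hform \<beta>s ks (p + t *\<^sub>R (c - p)) = 0" "p + t *\<^sub>R (c - p) \<in> closure A0"
    using first_crossing[OF p] by blast
  define z where "z = p + t *\<^sub>R (c - p)"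
  have \<beta>s: "\<beta>s \<in> \<Phi>" using s by (simp add: separating_def)
  have hzs: "hform \<beta>s ks z = 0" using z(1) by (simp add: z_def)
  have unique: "hyp \<beta> k = hyp \<beta>s ks" if \<beta>: "\<beta> \<in> \<Phi>" and hz: "hform \<beta> k z = 0" for \<beta> k
  proof (cases "\<beta> = \<beta>s \<or> \<beta> = -\<beta>s")
    case True
    then have "(\<beta> = \<beta>s \<and> k = ks) \<or> (\<beta> = -\<beta>s \<and> k = -ks)"
      using hz hzs by (auto simp: hform_def)
    then show ?thesis using hyp_eq_iff[OF \<beta>s \<beta>] by auto
  next
    case False
    have "(\<beta>, k) \<in> separating p c" using segment_zero_separating[OF p \<beta> t] hz by (simp add: z_def)
    then have "hform \<beta> k c * hform \<beta>s ks p \<noteq> hform \<beta>s ks c * hform \<beta> k p"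
      using off s False sep_eq by simp
    moreover have "hform \<beta> k c * hform \<beta>s ks z - hform \<beta>s ks c * hform \<beta> k z
        = (1 - t) * (hform \<beta> k c * hform \<beta>s ks p - hform \<beta>s ks c * hform \<beta> k p)"
      unfolding z_def hform_segment by (simp add: algebra_simps)
    ultimately show ?thesis using hz hzs t(2) by simp
  qed
  have "is_wall \<Phi> \<xi> (hyp \<beta>s ks)"
    unfolding is_wall_def
  proof (intro conjI bexI ballI impI)
    show "hyp \<beta>s ks \<in> hyperplanes \<Phi>" using \<beta>s by (auto simp: hyperplanes_def)
    show "z \<in> closure A0 \<inter> hyp \<beta>s ks" using z by (simp add: z_def mem_hyp_iff)
    fix H' assume "H' \<in> hyperplanes \<Phi>" "z \<in> H'"
    then show "H' = hyp \<beta>s ks" using unique by (auto simp: hyperplanes_def mem_hyp_iff)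
  qed
  then show ?thesis using s sep_eq by blast
qed

lemma wall_point:
  assumes "is_wall \<Phi> \<xi> (hyp \<beta>0 k0)"
  obtains z where "z \<in> closure A0" "hform \<beta>0 k0 z = 0"
    "\<forall>\<beta>\<in>\<Phi>. \<forall>k. hform \<beta> k z = 0 \<longrightarrow> hyp \<beta> k = hyp \<beta>0 k0"
proof -
  obtain z where z: "z \<in> closure A0 \<inter> hyp \<beta>0 k0" "\<forall>H'\<in>hyperplanes \<Phi>. z \<in> H' \<longrightarrow> H' = hyp \<beta>0 k0"
    using assms unfolding is_wall_def by blast
  have "hyp \<beta> k = hyp \<beta>0 k0" if "\<beta> \<in> \<Phi>" "hform \<beta> k z = 0" for \<beta> k
  proof -
    have "hyp \<beta> k \<in> hyperplanes \<Phi>" using that(1) by (auto simp: hyperplanes_def)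
    moreover have "z \<in> hyp \<beta> k" using that(2) by (simp add: mem_hyp_iff)
    ultimately show ?thesis using z(2) by blast
  qed
  then show thesis using that z(1) by (auto simp: mem_hyp_iff)
qed

text \<open>The reflection fixes a point \<open>z\<close> of the wall lying on no other hyperplane; points of \<open>A0\<close>
  near \<open>z\<close> and their mirror images are on the side of \<open>z\<close> of every other hyperplane.\<close>
lemma wall_reflection_separates_only_wall:
  assumes \<beta>0: "\<beta>0 \<in> \<Phi>" and wall: "is_wall \<Phi> \<xi> (hyp \<beta>0 k0)" and p: "p \<in> A0" and \<beta>: "\<beta> \<in> \<Phi>"
    and sep: "hform \<beta> k p * hform \<beta> k (srefl \<beta>0 k0 p) < 0"
  shows "hyp \<beta> k = hyp \<beta>0 k0"
proof (rule ccontr)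
  assume other: "hyp \<beta> k \<noteq> hyp \<beta>0 k0"
  obtain z where z: "z \<in> closure A0" "hform \<beta>0 k0 z = 0"
    "\<forall>\<beta>\<in>\<Phi>. \<forall>k. hform \<beta> k z = 0 \<longrightarrow> hyp \<beta> k = hyp \<beta>0 k0"
    using wall_point[OF wall] by blast
  have hz: "hform \<beta> k z \<noteq> 0" using z(3) other \<beta> by blast
  obtain e where e: "e > 0"
    "\<forall>\<beta>\<in>\<Phi>. \<forall>k v. hform \<beta> k z \<noteq> 0 \<longrightarrow> dist v z < e \<longrightarrow> hform \<beta> k v * hform \<beta> k z > 0"
    using locally_same_side by blast
  obtain p' where p': "p' \<in> A0" "dist p' z < e" using z(1) e(1) closure_approachable by blast
  have "srefl \<beta>0 k0 z = z" using z(2) srefl_fixed_iff[OF root_nonzero[OF \<beta>0]] by simp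
  then have "dist (srefl \<beta>0 k0 p') z < e" using p'(2) dist_srefl[of \<beta>0 k0 p' z] by simp
  then have 1: "hform \<beta> k (srefl \<beta>0 k0 p') * hform \<beta> k z > 0" using e(2) \<beta> hz by blast
  have 2: "hform \<beta> k p' * hform \<beta> k z > 0" using e(2) \<beta> hz p'(2) by blast
  have 3: "hform \<beta> k p * hform \<beta> k p' > 0" using alcove_same_side[OF p p'(1) \<beta>] .
  obtain \<beta>' k' where \<beta>': "\<beta>' \<in> \<Phi>" and pull: "hform \<beta> k \<circ> srefl \<beta>0 k0 = hform \<beta>' k'"
    using srefl_pullback[OF \<beta>0 \<beta>] by blast
  have 4: "hform \<beta> k (srefl \<beta>0 k0 p) * hform \<beta> k (srefl \<beta>0 k0 p') > 0"
    using alcove_same_side[OF p p'(1) \<beta>'] fun_cong[OF pull] by simp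
  have "hform \<beta> k p * hform \<beta> k (srefl \<beta>0 k0 p) > 0"
    using 1 2 3 4 by (auto simp: zero_less_mult_iff)
  then show False using sep by simp
qed

section \<open>The simple reflections generate the affine Weyl group\<close>

lemma wall_reflection_pullback_separating:
  assumes \<beta>0: "\<beta>0 \<in> \<Phi>" and wall: "is_wall \<Phi> \<xi> (hyp \<beta>0 k0)" and p0: "p0 \<in> A0"
    and sep0: "(\<beta>0, k0) \<in> separating p0 c"
    and sep: "(\<beta>, k) \<in> separating p0 (srefl \<beta>0 k0 c)"
    and \<beta>': "\<beta>' \<in> \<Phi>" and pull: "hform \<beta> k \<circ> srefl \<beta>0 k0 = hform \<beta>' k'"
  shows "(\<beta>', k') \<in> separating p0 c - {(\<beta>0, k0)}"
proof -
  define s where "s = srefl \<beta>0 k0"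
  have ss: "s (s v) = v" for v using srefl_srefl[OF root_nonzero[OF \<beta>0]] by (simp add: s_def)
  have \<beta>: "\<beta> \<in> \<Phi>" and sep_s: "hform \<beta> k p0 * hform \<beta> k (s c) < 0"
    using sep by (auto simp: separating_def s_def)
  have other: "hyp \<beta> k \<noteq> hyp \<beta>0 k0"
  proof
    assume eq: "hyp \<beta> k = hyp \<beta>0 k0"
    then have "(\<beta>, k) \<in> separating p0 c"
      using hyp_eq_iff[OF \<beta> \<beta>0] sep0 separating_uminus[of \<beta>0 k0] by auto
    moreover have "hform \<beta> k (s c) = - hform \<beta> k c"
      using srefl_eq_if_hyp_eq[OF \<beta> \<beta>0 eq] hform_srefl_self[OF root_nonzero[OF \<beta>]]
      by (simp add: s_def del: hform_srefl_self) metis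
    ultimately have "hform \<beta> k p0 * hform \<beta> k c < 0" "hform \<beta> k p0 * hform \<beta> k c > 0"
      using sep_s by (simp_all add: separating_def)
    then show False by simp
  qed
  have "hform \<beta> k p0 * hform \<beta> k (s p0) > 0"
  proof (rule mult_pos_of_not_neg)
    show "hform \<beta> k p0 \<noteq> 0" using alcove_generic[OF p0] \<beta> by (simp add: generic_def)
    show "hform \<beta> k (s p0) \<noteq> 0"
      using alcove_generic[OF p0] \<beta>' fun_cong[OF pull, of p0] by (simp add: generic_def s_def)
    show "\<not> hform \<beta> k p0 * hform \<beta> k (s p0) < 0"
      using wall_reflection_separates_only_wall[OF \<beta>0 wall p0 \<beta>] other by (auto simp: s_def)
  qed
  then have "hform \<beta> k (s p0) * hform \<beta> k (s c) < 0" using sep_s mult_pos_sign_cong by blast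
  then have "(\<beta>', k') \<in> separating p0 c" using \<beta>' fun_cong[OF pull] by (simp add: separating_def s_def)
  moreover have "(\<beta>', k') \<noteq> (\<beta>0, k0)"
  proof
    assume "(\<beta>', k') = (\<beta>0, k0)"
    then have "hform \<beta> k v = hform \<beta>0 k0 (s v)" for v
      using fun_cong[OF pull, of "s v"] ss[of v] by (simp add: s_def)
    then have "hform \<beta> k = hform (-\<beta>0) (-k0)"
      by (intro ext) (simp add: s_def hform_srefl_self root_nonzero[OF \<beta>0] hform_uminus)
    then show False using other hyp_eq_iff[OF \<beta>0 \<beta>] by (auto simp: hform_eq_iff)
  qed
  ultimately show ?thesis by simp
qed

lemma card_separating_wall_reflection:
  assumes \<beta>0: "\<beta>0 \<in> \<Phi>" and wall: "is_wall \<Phi> \<xi> (hyp \<beta>0 k0)" and p0: "p0 \<in> A0"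
    and sep0: "(\<beta>0, k0) \<in> separating p0 c"
  shows "card (separating p0 (srefl \<beta>0 k0 c)) < card (separating p0 c)"
proof -
  define s where "s = srefl \<beta>0 k0"
  have ss: "s \<circ> s = id" using srefl_srefl[OF root_nonzero[OF \<beta>0]] by (auto simp: s_def)
  have "\<forall>x\<in>separating p0 (s c). \<exists>y. fst y \<in> \<Phi> \<and> hform (fst x) (snd x) \<circ> s = hform (fst y) (snd y)"
    using srefl_pullback[OF \<beta>0] by (fastforce simp: separating_def s_def)
  then obtain \<pi> where \<pi>: "\<forall>x\<in>separating p0 (s c).
      fst (\<pi> x) \<in> \<Phi> \<and> hform (fst x) (snd x) \<circ> s = hform (fst (\<pi> x)) (snd (\<pi> x))"
    by (metis bchoice)
  have "inj_on \<pi> (separating p0 (s c))"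
  proof (rule inj_onI)
    fix x y assume "x \<in> separating p0 (s c)" "y \<in> separating p0 (s c)" "\<pi> x = \<pi> y"
    then have "hform (fst x) (snd x) \<circ> s = hform (fst y) (snd y) \<circ> s" using \<pi> by metis
    then have "hform (fst x) (snd x) \<circ> (s \<circ> s) = hform (fst y) (snd y) \<circ> (s \<circ> s)"
      by (simp add: comp_assoc[symmetric])
    then show "x = y" by (simp add: ss hform_eq_iff prod_eq_iff)
  qed
  moreover have "\<pi> ` separating p0 (s c) \<subseteq> separating p0 c - {(\<beta>0, k0)}"
  proof (rule image_subsetI)
    fix x assume x: "x \<in> separating p0 (s c)"
    obtain \<beta> k where xk: "x = (\<beta>, k)" by fastforce
    have "fst (\<pi> x) \<in> \<Phi>" "hform \<beta> k \<circ> s = hform (fst (\<pi> x)) (snd (\<pi> x))"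
      using \<pi> x xk by auto
    then show "\<pi> x \<in> separating p0 c - {(\<beta>0, k0)}"
      using wall_reflection_pullback_separating[OF \<beta>0 wall p0 sep0, of \<beta> k "fst (\<pi> x)" "snd (\<pi> x)"]
        x xk by (simp add: s_def)
  qed
  ultimately have "card (separating p0 (s c)) \<le> card (separating p0 c - {(\<beta>0, k0)})"
    using finite_separating by (intro card_inj_on_le) auto
  also have "\<dots> < card (separating p0 c)"
    using sep0 finite_separating by (intro card_Diff1_less) auto
  finally show ?thesis by (simp add: s_def)
qed

lemma alcove_word:
  assumes p0: "p0 \<in> A0" and "generic c"
  shows "\<exists>u. set u \<subseteq> S \<and> comp_list u c \<in> A0"
  using assms(2)
proof (induction "card (separating p0 c)" arbitrary: c rule: less_induct)
  case less
  show ?case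
  proof (cases "separating p0 c = {}")
    case True
    have "c \<in> A0"
    proof (rule in_alcoveI[OF p0], intro ballI allI)
      fix \<beta> k assume \<beta>: "\<beta> \<in> \<Phi>"
      show "hform \<beta> k p0 * hform \<beta> k c > 0"
      proof (rule mult_pos_of_not_neg)
        show "hform \<beta> k p0 \<noteq> 0" "hform \<beta> k c \<noteq> 0"
          using alcove_generic[OF p0] less.prems \<beta> by (auto simp: generic_def)
        show "\<not> hform \<beta> k p0 * hform \<beta> k c < 0" using True \<beta> by (auto simp: separating_def)
      qed
    qed
    then show ?thesis by (intro exI[of _ "[]"]) simp
  next
    case False
    then obtain \<beta>0 k0 where wall: "(\<beta>0, k0) \<in> separating p0 c" "is_wall \<Phi> \<xi> (hyp \<beta>0 k0)"
      using exists_separating_wall[OF less.prems p0] by blast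
    have \<beta>0: "\<beta>0 \<in> \<Phi>" using wall(1) by (simp add: separating_def)
    define s where "s = srefl \<beta>0 k0"
    have "s \<in> S" using \<beta>0 wall(2) by (auto simp: s_def simple_refls_def)
    then have "generic (s c)"
      using weyl_generic less.prems reflection_in_W simple_refls_subset by blast
    moreover have "card (separating p0 (s c)) < card (separating p0 c)"
      using card_separating_wall_reflection[OF \<beta>0 wall(2) p0 wall(1)] by (simp add: s_def)
    ultimately obtain u where "set u \<subseteq> S" "comp_list u (s c) \<in> A0" using less.hyps by blast
    then show ?thesis using \<open>s \<in> S\<close>
      by (intro exI[of _ "u @ [s]"]) (simp add: comp_list_append del: foldr_append)
  qed
qed

lemma generic_point_on_hyperplane:
  assumes \<beta>: "\<beta> \<in> \<Phi>"
  obtains z where "hform \<beta> k z = 0" "\<forall>\<beta>'\<in>\<Phi>. \<forall>k'. hform \<beta>' k' z = 0 \<longrightarrow> hyp \<beta>' k' = hyp \<beta> k"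
proof -
  define B where "B = inner \<beta> \<beta>"
  have "B > 0" using root_nonzero[OF \<beta>] by (simp add: B_def)
  define proj where "proj u = u - (hform \<beta> k u / B) *\<^sub>R \<beta>" for u
  have on_hyp: "hform \<beta> k (proj u) = 0" for u
    using \<open>B > 0\<close> by (simp add: proj_def hform_def B_def inner_diff_left)
  have norm_proj: "norm (proj u) \<le> norm (proj 0) + norm u" for u
  proof -
    have "proj u = (u - (inner u \<beta> / B) *\<^sub>R \<beta>) + proj 0"
      by (simp add: proj_def hform_def diff_divide_distrib scaleR_diff_left)
    then show ?thesis
      using norm_triangle_ineq[of "u - (inner u \<beta> / B) *\<^sub>R \<beta>" "proj 0"]
        norm_hyperplane_projection[of u \<beta>] by (simp add: B_def)
  qed
  define R where "R = norm (proj 0) + 1"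
  define F where "F = (\<lambda>(\<beta>', k'). (\<beta>' - (inner \<beta> \<beta>' / B) *\<^sub>R \<beta>, of_int k' - of_int k * inner \<beta> \<beta>' / B))
    ` {(\<beta>', k'). \<beta>' \<in> \<Phi> \<and> \<bar>real_of_int k'\<bar> \<le> R * norm \<beta>' \<and> \<beta>' \<noteq> \<beta> \<and> \<beta>' \<noteq> -\<beta>}"
  have "finite F"
    unfolding F_def by (intro finite_imageI finite_subset[OF _ finite_hyperplanes_bounded[of R]]) auto
  moreover have "\<forall>(a, b)\<in>F. a \<noteq> 0" unfolding F_def using root_not_multiple[OF \<beta>] by auto
  moreover have "ball (0::'a) 1 \<noteq> {}" by simp
  ultimately obtain u where u: "u \<in> ball 0 1" and avoid: "\<forall>(a, b)\<in>F. inner a u \<noteq> b"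
    using open_avoids_finite_hyperplanes[OF _ open_ball] by blast
  have "hyp \<beta>' k' = hyp \<beta> k" if \<beta>': "\<beta>' \<in> \<Phi>" and hz: "hform \<beta>' k' (proj u) = 0" for \<beta>' k'
  proof (cases "\<beta>' = \<beta> \<or> \<beta>' = -\<beta>")
    case True
    then have "(\<beta>' = \<beta> \<and> k' = k) \<or> (\<beta>' = -\<beta> \<and> k' = -k)"
      using hz on_hyp[of u] by (auto simp: hform_def)
    then show ?thesis using hyp_eq_iff[OF \<beta> \<beta>'] by auto
  next
    case False
    have "\<bar>real_of_int k'\<bar> \<le> norm (proj u) * norm \<beta>'" using hform_zero_bound[OF hz] .
    also have "\<dots> \<le> R * norm \<beta>'"
      using norm_proj[of u] u by (intro mult_right_mono) (auto simp: R_def)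
    finally have "(\<beta>' - (inner \<beta> \<beta>' / B) *\<^sub>R \<beta>, of_int k' - of_int k * inner \<beta> \<beta>' / B) \<in> F"
      unfolding F_def using \<beta>' False by (intro rev_image_eqI[of "(\<beta>', k')"]) auto
    then have "inner (\<beta>' - (inner \<beta> \<beta>' / B) *\<^sub>R \<beta>) u \<noteq> of_int k' - of_int k * inner \<beta> \<beta>' / B"
      using bspec[OF avoid] by fastforce
    then show ?thesis
      using hz hform_projection[OF root_nonzero[OF \<beta>], of \<beta>' k' u k] by (simp add: proj_def B_def)
  qed
  then show thesis using that on_hyp by blast
qed

lemma beside_generic_point:
  assumes \<beta>: "\<beta> \<in> \<Phi>" and hz: "hform \<beta> k z = 0"
    and uniq: "\<forall>\<beta>'\<in>\<Phi>. \<forall>k'. hform \<beta>' k' z = 0 \<longrightarrow> hyp \<beta>' k' = hyp \<beta> k"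
  obtains \<delta> where "\<delta> > 0" "generic (z + \<delta> *\<^sub>R \<beta>)"
    "\<And>t \<beta>' k'. 0 < t \<Longrightarrow> t \<le> \<delta> \<Longrightarrow> \<beta>' \<in> \<Phi> \<Longrightarrow>
       hform \<beta>' k' (z + t *\<^sub>R \<beta>) * hform \<beta>' k' (z + \<delta> *\<^sub>R \<beta>) > 0"
proof -
  obtain e where e: "e > 0"
    "\<forall>\<beta>'\<in>\<Phi>. \<forall>k' v. hform \<beta>' k' z \<noteq> 0 \<longrightarrow> dist v z < e \<longrightarrow> hform \<beta>' k' v * hform \<beta>' k' z > 0"
    using locally_same_side by blast
  have n\<beta>: "norm \<beta> > 0" using root_nonzero[OF \<beta>] by simp
  define \<delta> where "\<delta> = e / (2 * norm \<beta>)"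
  have "\<delta> > 0" using e(1) n\<beta> by (simp add: \<delta>_def)
  have hline: "hform \<beta> k (z + t *\<^sub>R \<beta>) = t * inner \<beta> \<beta>" for t
    using hz by (simp add: hform_def inner_add_left)
  have same: "hform \<beta>' k' (z + t *\<^sub>R \<beta>) * hform \<beta>' k' (z + \<delta> *\<^sub>R \<beta>) > 0"
    if t: "0 < t" "t \<le> \<delta>" and \<beta>': "\<beta>' \<in> \<Phi>" for t \<beta>' k'
  proof (cases "hform \<beta>' k' z = 0")
    case True
    then have "(\<beta>' = \<beta> \<and> k' = k) \<or> (\<beta>' = -\<beta> \<and> k' = -k)"
      using uniq \<beta>' hyp_eq_iff[OF \<beta> \<beta>'] by blast
    then show ?thesis
      using t \<open>\<delta> > 0\<close> root_nonzero[OF \<beta>] by (auto simp: hline hform_uminus)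
  next
    case False
    have "dist (z + s *\<^sub>R \<beta>) z < e" if "0 < s" "s \<le> \<delta>" for s
    proof -
      have "dist (z + s *\<^sub>R \<beta>) z \<le> \<delta> * norm \<beta>"
        using that n\<beta> by (simp add: dist_norm mult_right_mono)
      also have "\<dots> < e" using e(1) n\<beta> by (simp add: \<delta>_def)
      finally show ?thesis .
    qed
    then have "hform \<beta>' k' (z + t *\<^sub>R \<beta>) * hform \<beta>' k' z > 0"
      "hform \<beta>' k' (z + \<delta> *\<^sub>R \<beta>) * hform \<beta>' k' z > 0"
      using e(2) \<beta>' False t \<open>\<delta> > 0\<close> by auto
    then show ?thesis by (auto simp: zero_less_mult_iff)
  qed
  have "generic (z + \<delta> *\<^sub>R \<beta>)"
    unfolding generic_def using same[OF \<open>\<delta> > 0\<close> order_refl] by (metis less_irrefl mult_zero_left)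
  then show thesis using that same \<open>\<delta> > 0\<close> by blast
qed

lemma image_hyperplane_wall:
  assumes U: "U \<in> W" and UV: "\<And>v. U (V v) = v" and VU: "\<And>v. V (U v) = v"
    and hz: "hform \<beta> k z = 0"
    and uniq: "\<forall>\<beta>'\<in>\<Phi>. \<forall>k'. hform \<beta>' k' z = 0 \<longrightarrow> hyp \<beta>' k' = hyp \<beta> k"
    and "\<delta> > 0" and beside: "\<And>t. 0 < t \<Longrightarrow> t \<le> \<delta> \<Longrightarrow> U (z + t *\<^sub>R \<beta>) \<in> A0"
    and \<beta>1: "\<beta>1 \<in> \<Phi>" and pull: "hform \<beta> k \<circ> V = hform \<beta>1 k1"
  shows "is_wall \<Phi> \<xi> (hyp \<beta>1 k1)"
  unfolding is_wall_def
proof (intro conjI bexI ballI impI)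
  show "hyp \<beta>1 k1 \<in> hyperplanes \<Phi>" using \<beta>1 by (auto simp: hyperplanes_def)
  have "hform \<beta>1 k1 (U z) = 0" using fun_cong[OF pull, of "U z"] hz by (simp add: VU)
  moreover have "U z \<in> closure A0"
  proof -
    define line where "line t = U (z + t *\<^sub>R \<beta>)" for t
    have "line ` {0<..\<delta>} \<subseteq> closure A0" using beside closure_subset by (force simp: line_def)
    moreover have "continuous_on UNIV line"
      unfolding line_def[abs_def]
      by (intro continuous_on_compose2[OF weyl_continuous[OF U]] continuous_intros) auto
    ultimately have "line ` closure {0<..\<delta>} \<subseteq> closure A0"
      by (intro image_closure_subset) (auto intro: continuous_on_subset)
    then show ?thesis using \<open>\<delta> > 0\<close> by (force simp: line_def)
  qed
  ultimately show "U z \<in> closure A0 \<inter> hyp \<beta>1 k1" by (simp add: mem_hyp_iff)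
  fix H' assume "H' \<in> hyperplanes \<Phi>" "U z \<in> H'"
  then obtain \<beta>2 k2 where H': "H' = hyp \<beta>2 k2" "\<beta>2 \<in> \<Phi>" "hform \<beta>2 k2 (U z) = 0"
    by (auto simp: hyperplanes_def mem_hyp_iff)
  obtain \<beta>3 k3 where \<beta>3: "\<beta>3 \<in> \<Phi>" "hform \<beta>2 k2 \<circ> U = hform \<beta>3 k3"
    using weyl_pullback[OF U H'(2)] by blast
  have "hform \<beta>3 k3 z = 0" using fun_cong[OF \<beta>3(2), of z] H'(3) by simp
  then have "hyp \<beta>3 k3 = hyp \<beta> k" using uniq \<beta>3(1) by blast
  then have "hform \<beta>3 k3 (V v) = 0 \<longleftrightarrow> hform \<beta> k (V v) = 0" for v by (metis mem_hyp_iff)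
  moreover have "hform \<beta>2 k2 v = hform \<beta>3 k3 (V v)" for v using fun_cong[OF \<beta>3(2), of "V v"] by (simp add: UV)
  ultimately show "H' = hyp \<beta>1 k1"
    using fun_cong[OF pull] by (auto simp: H'(1) mem_hyp_iff)
qed

lemma srefl_simple_word:
  assumes \<beta>: "\<beta> \<in> \<Phi>"
  shows "\<exists>ws. set ws \<subseteq> S \<and> comp_list ws = srefl \<beta> k"
proof -
  obtain z where hz: "hform \<beta> k z = 0"
    and uniq: "\<forall>\<beta>'\<in>\<Phi>. \<forall>k'. hform \<beta>' k' z = 0 \<longrightarrow> hyp \<beta>' k' = hyp \<beta> k"
    using generic_point_on_hyperplane[OF \<beta>] by blast
  obtain \<delta> where "\<delta> > 0" and c: "generic (z + \<delta> *\<^sub>R \<beta>)"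
    and same: "\<And>t \<beta>' k'. 0 < t \<Longrightarrow> t \<le> \<delta> \<Longrightarrow> \<beta>' \<in> \<Phi> \<Longrightarrow>
       hform \<beta>' k' (z + t *\<^sub>R \<beta>) * hform \<beta>' k' (z + \<delta> *\<^sub>R \<beta>) > 0"
    using beside_generic_point[OF \<beta> hz uniq] by blast
  obtain p0 where p0: "p0 \<in> A0" using alcove_nonempty by blast
  obtain u where u: "set u \<subseteq> S" "comp_list u (z + \<delta> *\<^sub>R \<beta>) \<in> A0"
    using alcove_word[OF p0 c] by blast
  define U where "U = comp_list u"
  define V where "V = comp_list (rev u)"
  have VU: "V (U v) = v" and UV: "U (V v) = v" for v
    using simple_word_inverse[OF u(1)] by (simp_all add: U_def V_def)
  have U: "U \<in> W" and V: "V \<in> W" using simple_word_in_W u(1) by (auto simp: U_def V_def)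
  obtain \<beta>1 k1 where \<beta>1: "\<beta>1 \<in> \<Phi>" "hform \<beta> k \<circ> V = hform \<beta>1 k1"
    and conj: "srefl \<beta> k \<circ> V = V \<circ> srefl \<beta>1 k1"
    using weyl_pullback[OF V \<beta>] by blast
  have "U (z + t *\<^sub>R \<beta>) \<in> A0" if "0 < t" "t \<le> \<delta>" for t
  proof (rule in_alcoveI[OF u(2)[folded U_def]], intro ballI allI)
    fix \<beta>' k' assume "\<beta>' \<in> \<Phi>"
    then obtain \<beta>'' k'' where \<beta>'': "\<beta>'' \<in> \<Phi>" and pullU: "hform \<beta>' k' \<circ> U = hform \<beta>'' k''"
      using weyl_pullback[OF U] by blast
    have "hform \<beta>' k' (U v) = hform \<beta>'' k'' v" for v using fun_cong[OF pullU, of v] by simp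
    then show "hform \<beta>' k' (U (z + \<delta> *\<^sub>R \<beta>)) * hform \<beta>' k' (U (z + t *\<^sub>R \<beta>)) > 0"
      using same[OF that \<beta>''] by (simp add: mult.commute)
  qed
  then have "is_wall \<Phi> \<xi> (hyp \<beta>1 k1)"
    using image_hyperplane_wall[OF U UV VU hz uniq \<open>\<delta> > 0\<close> _ \<beta>1] by blast
  then have "srefl \<beta>1 k1 \<in> S" using \<beta>1(1) by (auto simp: simple_refls_def)
  moreover have "srefl \<beta> k = V \<circ> srefl \<beta>1 k1 \<circ> U"
  proof -
    have "srefl \<beta> k = srefl \<beta> k \<circ> (V \<circ> U)" using VU by (simp add: fun_eq_iff)
    also have "\<dots> = V \<circ> srefl \<beta>1 k1 \<circ> U" by (simp only: comp_assoc[symmetric] conj)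
    finally show ?thesis .
  qed
  then have "comp_list (rev u @ srefl \<beta>1 k1 # u) = srefl \<beta> k"
    by (simp add: comp_list_append V_def U_def comp_assoc del: foldr_append)
  ultimately show ?thesis using u(1) by (intro exI[of _ "rev u @ srefl \<beta>1 k1 # u"]) auto
qed

lemma weyl_simple_word: "w \<in> W \<Longrightarrow> \<exists>ws. set ws \<subseteq> S \<and> comp_list ws = w"
proof (induction rule: affine_weyl.induct)
  case (step r w)
  obtain \<beta> k where r: "r = srefl \<beta> k" "\<beta> \<in> \<Phi>" using step.hyps(1) by (auto simp: affine_reflections_def)
  obtain ws1 where 1: "set ws1 \<subseteq> S" "comp_list ws1 = r" using srefl_simple_word[OF r(2)] r(1) by blast
  obtain ws2 where 2: "set ws2 \<subseteq> S" "comp_list ws2 = w" using step.IH by blast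
  have "comp_list (ws1 @ ws2) = r \<circ> w" by (simp only: comp_list_append 1(2) 2(2))
  moreover have "set (ws1 @ ws2) \<subseteq> S" using 1(1) 2(1) by simp
  ultimately show ?case by blast
qed (intro exI[of _ "[]"], simp)

section \<open>Length and separating hyperplanes\<close>

lemma exists_reduced_word: "w \<in> W \<Longrightarrow> \<exists>ws. length ws = len w \<and> set ws \<subseteq> S \<and> comp_list ws = w"
  unfolding coxeter_length_def by (rule LeastI_ex) (use weyl_simple_word in blast)

lemma len_le_length: "set ws \<subseteq> S \<Longrightarrow> len (comp_list ws) \<le> length ws"
  unfolding coxeter_length_def by (rule Least_le) blast

lemma length_srefl_less:
  assumes w: "w \<in> W" and \<beta>: "\<beta> \<in> \<Phi>" and p0: "p0 \<in> A0"
    and sep: "hform \<beta> k p0 * hform \<beta> k (w p0) < 0"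
  shows "len (srefl \<beta> k \<circ> w) < len w"
proof -
  obtain ws where ws: "length ws = len w" "set ws \<subseteq> S" "comp_list ws = w"
    using exists_reduced_word[OF w] by blast
  define q where "q i = comp_list (take i ws) p0" for i
  have prefix_W: "comp_list (take i ws) \<in> W" for i
    using ws(2) set_take_subset[of i ws] by (intro simple_word_in_W) blast
  have "\<forall>i\<le>length ws. hform \<beta> k (q i) \<noteq> 0"
    using weyl_generic[OF prefix_W alcove_generic[OF p0]] \<beta> by (simp add: generic_def q_def)
  moreover have "hform \<beta> k (q 0) * hform \<beta> k (q (length ws)) < 0" using sep ws(3) by (simp add: q_def)
  ultimately obtain j where j: "j < length ws" "hform \<beta> k (q j) * hform \<beta> k (q (Suc j)) < 0"
    using sign_change_step[of "length ws" "\<lambda>i. hform \<beta> k (q i)"] by blast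
  define wj where "wj = comp_list (take j ws)"
  define sj where "sj = ws ! j"
  have "sj \<in> S" using ws(2) j(1) by (auto simp: sj_def)
  then obtain \<beta>0 k0 where s0: "sj = srefl \<beta>0 k0" "\<beta>0 \<in> \<Phi>" "is_wall \<Phi> \<xi> (hyp \<beta>0 k0)"
    by (auto simp: simple_refls_def)
  have q_Suc: "q (Suc j) = wj (sj p0)"
    using j(1) by (simp add: q_def wj_def sj_def take_Suc_conv_app_nth comp_list_append del: foldr_append)
  obtain \<beta>' k' where \<beta>': "\<beta>' \<in> \<Phi>" "hform \<beta> k \<circ> wj = hform \<beta>' k'"
    and conj: "srefl \<beta> k \<circ> wj = wj \<circ> srefl \<beta>' k'"
    using weyl_pullback[OF prefix_W \<beta>] wj_def by blast
  have "hform \<beta>' k' p0 * hform \<beta>' k' (sj p0) < 0"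
    using j(2) q_Suc fun_cong[OF \<beta>'(2)] by (simp add: q_def wj_def)
  then have "hyp \<beta>' k' = hyp \<beta>0 k0"
    using wall_reflection_separates_only_wall[OF s0(2,3) p0 \<beta>'(1)] s0(1) by simp
  then have "srefl \<beta>' k' = sj" using srefl_eq_if_hyp_eq[OF \<beta>'(1) s0(2)] s0(1) by simp
  moreover have "sj \<circ> sj = id" using reflection_involutive simple_refls_subset \<open>sj \<in> S\<close> by blast
  ultimately have "srefl \<beta> k \<circ> w = comp_list (take j ws @ drop (Suc j) ws)"
    using comp_list_delete[OF j(1)] conj ws(3) by (simp add: wj_def sj_def)
  moreover have "set (take j ws @ drop (Suc j) ws) \<subseteq> S"
    using ws(2) set_take_subset set_drop_subset by fastforce
  ultimately have "len (srefl \<beta> k \<circ> w) \<le> length ws - 1"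
    using len_le_length j(1) by fastforce
  then show ?thesis using j(1) ws(1) by linarith
qed

lemma length_srefl_iff:
  assumes w: "w \<in> W" and \<beta>: "\<beta> \<in> \<Phi>" and p0: "p0 \<in> A0"
  shows "len w < len (srefl \<beta> k \<circ> w) \<longleftrightarrow> hform \<beta> k p0 * hform \<beta> k (w p0) > 0"
proof
  assume "len w < len (srefl \<beta> k \<circ> w)"
  then have "\<not> hform \<beta> k p0 * hform \<beta> k (w p0) < 0"
    using length_srefl_less[OF w \<beta> p0] by fastforce
  then show "hform \<beta> k p0 * hform \<beta> k (w p0) > 0"
    using weyl_generic[OF w] alcove_generic[OF p0] \<beta>
    by (intro mult_pos_of_not_neg) (auto simp: generic_def)
next
  assume pos: "hform \<beta> k p0 * hform \<beta> k (w p0) > 0"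
  have sw: "srefl \<beta> k \<circ> w \<in> W" using srefl_reflection[OF \<beta>] w by (rule affine_weyl.step)
  have "hform \<beta> k p0 * hform \<beta> k ((srefl \<beta> k \<circ> w) p0) < 0"
    using pos hform_srefl_self[OF root_nonzero[OF \<beta>]] by simp
  then have "len (srefl \<beta> k \<circ> (srefl \<beta> k \<circ> w)) < len (srefl \<beta> k \<circ> w)"
    by (rule length_srefl_less[OF sw \<beta> p0])
  moreover have "srefl \<beta> k \<circ> (srefl \<beta> k \<circ> w) = w"
    using srefl_srefl[OF root_nonzero[OF \<beta>]] by (simp add: fun_eq_iff)
  ultimately show "len w < len (srefl \<beta> k \<circ> w)" by simp
qed

lemma H1_srefl:
  "\<beta> \<in> \<Phi> \<Longrightarrow> p0 \<in> A0 \<Longrightarrow> H1 \<Phi> \<xi> (srefl \<beta> k) = {w \<in> W. hform \<beta> k p0 * hform \<beta> k (w p0) > 0}"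
  unfolding H1_def using length_srefl_iff by auto

section \<open>Reflections in parallel hyperplanes\<close>

lemma reflection_eq_srefl:
  assumes "r \<in> affine_reflections \<Phi>" and \<alpha>: "\<alpha> \<in> \<Phi>" and fixed: "{v. r v = v} = hyp \<alpha> k"
  shows "r = srefl \<alpha> k"
proof -
  obtain \<beta> k' where r: "r = srefl \<beta> k'" "\<beta> \<in> \<Phi>" using assms(1) by (auto simp: affine_reflections_def)
  then have "{v. r v = v} = hyp \<beta> k'" using srefl_fixed_iff[OF root_nonzero] by (auto simp: mem_hyp_iff)
  then show ?thesis using srefl_eq_if_hyp_eq[OF r(2) \<alpha>] fixed r(1) by simp
qed

lemma two_ascents_below:
  assumes w: "w \<in> W" and \<alpha>: "\<alpha> \<in> \<Phi>" and p0: "p0 \<in> A0"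
    and asc1: "len w < len (srefl \<alpha> m \<circ> w)"
    and asc2: "len (srefl \<alpha> m \<circ> w) < len (srefl \<alpha> (m + 1) \<circ> (srefl \<alpha> m \<circ> w))"
  shows "inner p0 \<alpha> < of_int m + 1"
proof -
  have sw: "srefl \<alpha> m \<circ> w \<in> W" using srefl_reflection[OF \<alpha>] w by (rule affine_weyl.step)
  define a where "a = hform \<alpha> m p0"
  define h where "h = hform \<alpha> m (w p0)"
  have shift: "hform \<alpha> (m + 1) v = hform \<alpha> m v - 1" for v by (simp add: hform_def)
  have "a * h > 0" using asc1 length_srefl_iff[OF w \<alpha> p0] by (simp add: a_def h_def)
  moreover have "(a - 1) * (- h - 1) > 0"
    using asc2 length_srefl_iff[OF sw \<alpha> p0] hform_srefl_self[OF root_nonzero[OF \<alpha>]]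
    by (simp add: a_def h_def shift)
  moreover have "a - 1 \<noteq> 0" using alcove_generic[OF p0] \<alpha> by (simp add: generic_def a_def shift[symmetric])
  ultimately have "a < 1" by (auto simp: zero_less_mult_iff)
  then show ?thesis by (simp add: a_def hform_def)
qed

lemma H1_srefl_mono:
  assumes \<alpha>: "\<alpha> \<in> \<Phi>" and p0: "p0 \<in> A0" and below: "inner p0 \<alpha> < of_int m"
  shows "H1 \<Phi> \<xi> (srefl \<alpha> m) \<subseteq> H1 \<Phi> \<xi> (srefl \<alpha> (m + 1))"
  using below by (auto simp: H1_srefl[OF \<alpha> p0] hform_def zero_less_mult_iff)

end

theorem proposition4p1:
  fixes \<Phi> :: "'a::euclidean_space set" and \<xi> \<alpha> :: 'a
    and x :: "'a \<Rightarrow> 'a" and r :: "nat \<Rightarrow> 'a \<Rightarrow> 'a" and n :: nat and c :: int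
  assumes "root_system \<Phi>"
    and "\<forall>\<beta>\<in>\<Phi>. inner \<beta> \<xi> \<noteq> 0"
    and "x \<in> affine_weyl \<Phi>"
    and "\<alpha> \<in> \<Phi>"
    and "\<forall>t\<in>{1..n}. r t \<in> affine_reflections \<Phi> \<and> {v. r t v = v} = hyp \<alpha> (c + int t)"
    and "\<forall>t\<in>{1..n}. coxeter_length \<Phi> \<xi> (rprod r t x) > coxeter_length \<Phi> \<xi> (rprod r (t - 1) x)"
  shows "\<forall>t\<in>{3..n}. H1 \<Phi> \<xi> (r (t - 1)) \<subseteq> H1 \<Phi> \<xi> (r t)"
proof
  interpret affine_weyl_setting \<Phi> \<xi> using assms(1,2) by unfold_locales
  obtain p0 where p0: "p0 \<in> A0" using alcove_nonempty by blast
  have r: "r t = srefl \<alpha> (c + int t)" if "1 \<le> t" "t \<le> n" for t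
    using reflection_eq_srefl assms(4,5) that by auto
  have ascent: "len (rprod r i x) < len (srefl \<alpha> (c + int (Suc i)) \<circ> rprod r i x)" if "Suc i \<le> n" for i
    using bspec[OF assms(6), of "Suc i"] r[of "Suc i"] that by simp
  have in_W: "rprod r i x \<in> W" if "i \<le> n" for i
    using that assms(3,5) by (induction i) (auto intro: affine_weyl.step)
  fix t assume "t \<in> {3..n}"
  then obtain s where t: "t = s + 3" "s + 3 \<le> n" by (metis atLeastAtMost_iff le_add_diff_inverse2)
  define m where "m = c + int (Suc s)"
  have r_t: "r (t - 1) = srefl \<alpha> (m + 1)" "r t = srefl \<alpha> (m + 1 + 1)"
    using r[of "t - 1"] r[of t] t by (simp_all add: m_def add_ac)
  have asc1: "len (rprod r s x) < len (srefl \<alpha> m \<circ> rprod r s x)"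
    using ascent[of s] t(2) by (simp add: m_def)
  have "len (rprod r (Suc s) x) < len (srefl \<alpha> (c + int (Suc (Suc s))) \<circ> rprod r (Suc s) x)"
    using ascent[of "Suc s"] t(2) by simp
  then have asc2: "len (srefl \<alpha> m \<circ> rprod r s x) < len (srefl \<alpha> (m + 1) \<circ> (srefl \<alpha> m \<circ> rprod r s x))"
    using r[of "Suc s"] t(2) by (simp add: m_def add_ac)
  have "inner p0 \<alpha> < of_int (m + 1)"
    using two_ascents_below[OF in_W[of s] assms(4) p0 asc1 asc2] t(2) by simp
  then show "H1 \<Phi> \<xi> (r (t - 1)) \<subseteq> H1 \<Phi> \<xi> (r t)"
    unfolding r_t by (rule H1_srefl_mono[OF assms(4) p0])
qed

end
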